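(* For every $\mathsf{C\text{-}RASP}_+$ program of size $n$, depth $d$, precision $p$ and girth $g$, there is an equivalent decomposed $\mathsf{C\text{-}RASP}_+$ program of size $O(n\,2^{\mathrm{poly}(p,g,d)})$, depth $O(d)$ and precision $O(p)$.
   Context: $\mathsf{C\text{-}RASP}_+$ formulas over a finite alphabet $\Sigma$: $\phi ::= \sigma \mid \neg\phi \mid \phi_1\wedge\phi_2 \mid \sum_{t\in\mathcal T}\alpha_t t\sim k$, terms $t ::= \#[\phi] \mid c$, with $\sigma\in\Sigma$, $\alpha_t,k,c\in\mathbb{N}$, ${\sim}\in\{\ge,>,=,<,\le\}$. Semantics at position $i$ of $w$: $w,i\models\sigma$ iff $w_i=\sigma$; Boolean connectives as usual; $\#[\phi]$ evaluates to $|\{j\in[1,i]: w,j\models\phi\}|$, $c$ to $c$, and comparisons are integer comparisons; $w\models\phi$ iff $w,|w|\models\phi$. Two programs are equivalent if they define the same language. Programs are straight-line (DAG) representations $(\phi_1,\dots,\phi_m)$ where $\phi_i$ may refer to earlier $\phi_j$; size is the total number of symbols with constants in binary and each reference counted as 1. Depth: $\mathrm{dp}(\sigma)=\mathrm{dp}(c)=0$, $\mathrm{dp}(\neg\phi)=\mathrm{dp}(\phi)$, $\mathrm{dp}(\phi_1\wedge\phi_2)=\max(\mathrm{dp}(\phi_1),\mathrm{dp}(\phi_2))$, $\mathrm{dp}(\#[\phi])=\mathrm{dp}(\phi)+1$, and the depth of a comparison is the maximal depth of its terms; the depth of a program is the maximum depth of its lines. The precision of a program is the number of bits needed to encode its largest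 constant; its girth is the maximum number of summands in any sum occurring in it. A program is decomposed if every counting formula in it has the form $\#[\phi]\ge c$ with $\phi$ decomposed and $c\in\mathbb N$. *)

theory Defs
  imports Main
begin

datatype cmp = Ge | Gt | Eq | Lt | Le

text \<open>Formulas over letters of type 'a. \<open>Ref j\<close> refers to line \<open>j\<close> (0-based) of the program.
  A comparison \<open>Cmp ts c k\<close> is \<open>\<Sum>(\<alpha>,t)\<in>ts. \<alpha> t  c  k\<close>; a term is \<open>#[\<phi>]\<close> or a constant.\<close>
datatype 'a form =
    Letter 'a
  | Neg "'a form"
  | And "'a form" "'a form"
  | Cmp "(nat \<times> 'a tm) list" cmp nat
  | Ref nat
and 'a tm = Count "'a form" | Const nat

fun cmp_sem :: "cmp \<Rightarrow> nat \<Rightarrow> nat \<Rightarrow> bool" where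
  "cmp_sem Ge x k = (x \<ge> k)"
| "cmp_sem Gt x k = (x > k)"
| "cmp_sem Eq x k = (x = k)"
| "cmp_sem Lt x k = (x < k)"
| "cmp_sem Le x k = (x \<le> k)"

text \<open>\<open>holds P w i \<phi>\<close>: \<open>w, i \<Turnstile> \<phi>\<close> where references are resolved in the lines \<open>P\<close>
  preceding \<phi>. Positions are 1-based: \<open>w\<^sub>i = w ! (i - 1)\<close>.\<close>
function holds :: "'a form list \<Rightarrow> 'a list \<Rightarrow> nat \<Rightarrow> 'a form \<Rightarrow> bool" where
  "holds P w i (Letter a) = (1 \<le> i \<and> i \<le> length w \<and> w ! (i - 1) = a)"
| "holds P w i (Neg \<phi>) = (\<not> holds P w i \<phi>)"
| "holds P w i (And \<phi> \<psi>) = (holds P w i \<phi> \<and> holds P w i \<psi>)"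
| "holds P w i (Cmp ts c k) =
     cmp_sem c (sum_list (map (\<lambda>(\<alpha>, t). \<alpha> * (case t of Const m \<Rightarrow> m
        | Count \<phi> \<Rightarrow> length (filter (\<lambda>j. holds P w j \<phi>) [1..<Suc i]))) ts)) k"
| "holds P w i (Ref j) = (if j < length P then holds (take j P) w i (P ! j) else False)"
  by pat_completeness auto
lemma size_Count_lt:
  assumes "(a, Count x1) \<in> set ts"
  shows "size x1 < Suc (size_list (size_prod (\<lambda>x. 0) size) ts)"
proof -
  have "Suc (size x1) \<le> size_prod (\<lambda>x. 0) size (a, Count x1)" by simp
  also have "\<dots> \<le> size_list (size_prod (\<lambda>x. 0) size) ts"
    using assms by (rule size_list_estimation') simp
  finally show ?thesis by simp
qed

termination
  apply (relation "measures [\<lambda>(P, w, i, \<phi>). length P, \<lambda>(P, w, i, \<phi>). size \<phi>]")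
  apply (auto intro: size_Count_lt)
  done


definition lang :: "'a set \<Rightarrow> 'a form list \<Rightarrow> 'a list set" where
  "lang \<Sigma> P = {w \<in> lists \<Sigma>. holds (butlast P) w (length w) (last P)}"

fun frefs :: "'a form \<Rightarrow> nat set" where
  "frefs (Letter a) = {}"
| "frefs (Neg \<phi>) = frefs \<phi>"
| "frefs (And \<phi> \<psi>) = frefs \<phi> \<union> frefs \<psi>"
| "frefs (Cmp ts c k) = (\<Union>(\<alpha>, t) \<in> set ts. case t of Const m \<Rightarrow> {} | Count \<phi> \<Rightarrow> frefs \<phi>)"
| "frefs (Ref j) = {j}"

fun fletters :: "'a form \<Rightarrow> 'a set" where
  "fletters (Letter a) = {a}"
| "fletters (Neg \<phi>) = fletters \<phi>"
| "fletters (And \<phi> \<psi>) = fletters \<phi> \<union> fletters \<psi>"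
| "fletters (Cmp ts c k) = (\<Union>(\<alpha>, t) \<in> set ts. case t of Const m \<Rightarrow> {} | Count \<phi> \<Rightarrow> fletters \<phi>)"
| "fletters (Ref j) = {}"

definition program :: "'a set \<Rightarrow> 'a form list \<Rightarrow> bool" where
  "program \<Sigma> P \<longleftrightarrow> P \<noteq> [] \<and>
     (\<forall>i < length P. (\<forall>j \<in> frefs (P ! i). j < i) \<and> fletters (P ! i) \<subseteq> \<Sigma>)"

text \<open>Number of bits of a natural number (binary encoding; 0 takes one bit).\<close>
fun bitlen :: "nat \<Rightarrow> nat" where
  "bitlen n = (if n < 2 then 1 else Suc (bitlen (n div 2)))"

text \<open>Number of symbols; constants count with their binary length, a reference counts 1.
  A comparison counts one symbol for the relation, one per summand (operator), plus the
  sizes of coefficients, terms and the bound.\<close>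
fun fsize :: "'a form \<Rightarrow> nat" where
  "fsize (Letter a) = 1"
| "fsize (Neg \<phi>) = Suc (fsize \<phi>)"
| "fsize (And \<phi> \<psi>) = Suc (fsize \<phi> + fsize \<psi>)"
| "fsize (Cmp ts c k) = Suc (bitlen k + sum_list (map (\<lambda>(\<alpha>, t). Suc (bitlen \<alpha> +
      (case t of Const m \<Rightarrow> bitlen m | Count \<phi> \<Rightarrow> Suc (fsize \<phi>)))) ts))"
| "fsize (Ref j) = 1"

definition psize :: "'a form list \<Rightarrow> nat" where
  "psize P = sum_list (map fsize P)"

function dp :: "'a form list \<Rightarrow> 'a form \<Rightarrow> nat" where
  "dp P (Letter a) = 0"
| "dp P (Neg \<phi>) = dp P \<phi>"
| "dp P (And \<phi> \<psi>) = max (dp P \<phi>) (dp P \<psi>)"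
| "dp P (Cmp ts c k) = fold max (map (\<lambda>(\<alpha>, t). case t of Const m \<Rightarrow> 0
      | Count \<phi> \<Rightarrow> Suc (dp P \<phi>)) ts) 0"
| "dp P (Ref j) = (if j < length P then dp (take j P) (P ! j) else 0)"
  by pat_completeness auto
termination
  apply (relation "measures [\<lambda>(P, \<phi>). length P, \<lambda>(P, \<phi>). size \<phi>]")
  apply (auto intro: size_Count_lt)
  done

definition depth :: "'a form list \<Rightarrow> nat" where
  "depth P = Max (set (0 # map (\<lambda>i. dp (take i P) (P ! i)) [0..<length P]))"

fun fconsts :: "'a form \<Rightarrow> nat list" where
  "fconsts (Letter a) = []"
| "fconsts (Neg \<phi>) = fconsts \<phi>"
| "fconsts (And \<phi> \<psi>) = fconsts \<phi> @ fconsts \<psi>"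
| "fconsts (Cmp ts c k) = k # concat (map (\<lambda>(\<alpha>, t). \<alpha> #
      (case t of Const m \<Rightarrow> [m] | Count \<phi> \<Rightarrow> fconsts \<phi>)) ts)"
| "fconsts (Ref j) = []"

definition precision :: "'a form list \<Rightarrow> nat" where
  "precision P = bitlen (Max (set (0 # concat (map fconsts P))))"

fun fgirth :: "'a form \<Rightarrow> nat" where
  "fgirth (Letter a) = 0"
| "fgirth (Neg \<phi>) = fgirth \<phi>"
| "fgirth (And \<phi> \<psi>) = max (fgirth \<phi>) (fgirth \<psi>)"
| "fgirth (Cmp ts c k) = fold max (map (\<lambda>(\<alpha>, t). case t of Const m \<Rightarrow> 0
      | Count \<phi> \<Rightarrow> fgirth \<phi>) ts) (length ts)"
| "fgirth (Ref j) = 0"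

definition girth :: "'a form list \<Rightarrow> nat" where
  "girth P = Max (set (0 # map fgirth P))"

fun fdecomposed :: "'a form \<Rightarrow> bool" where
  "fdecomposed (Letter a) = True"
| "fdecomposed (Neg \<phi>) = fdecomposed \<phi>"
| "fdecomposed (And \<phi> \<psi>) = (fdecomposed \<phi> \<and> fdecomposed \<psi>)"
| "fdecomposed (Cmp ts c k) = (c = Ge \<and> (case ts of
      [(\<alpha>, Count \<phi>)] \<Rightarrow> \<alpha> = 1 \<and> fdecomposed \<phi> | _ \<Rightarrow> False))"
| "fdecomposed (Ref j) = True"

definition decomposed :: "'a form list \<Rightarrow> bool" where
  "decomposed P \<longleftrightarrow> (\<forall>\<phi> \<in> set P. fdecomposed \<phi>)"

end

(* A comparison  sum_i alpha_i #[phi_i] + S ~ k  (S the constant part) only depends on whether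
   the weighted count  sum_i alpha_i x_i  reaches k - S or k + 1 - S, and
   alpha_1 x_1 + ... + alpha_n x_n >= T  holds iff for some c <= T both  x_1 >= c  and
   alpha_2 x_2 + ... + alpha_n x_n >= T - alpha_1 c.  Unfolding this recursion turns every
   comparison into a Boolean combination of atoms  #[psi] >= c  with c <= k + 1: the recursion
   has at most g levels (the girth) and at most k + 2 < 2^(p+1) branches per level.
   Translating every line separately keeps the references, so the depth does not grow and the
   constants grow by at most one, while each of the at most d nested counting levels multiplies
   the size by 2^O(p g); this yields the factor 2^O(p g d). *)

theory Submission
  imports Defs
begin

declare bitlen.simps[simp del]

text \<open>The syntax has no Boolean constants, so they are built from some letter \<open>a\<close>; this is
  where the nonemptiness of the alphabet is used.\<close>

definition false_form :: "'a \<Rightarrow> 'a form" where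
  "false_form a = And (Letter a) (Neg (Letter a))"

definition true_form :: "'a \<Rightarrow> 'a form" where
  "true_form a = Neg (false_form a)"

definition or_form :: "'a form \<Rightarrow> 'a form \<Rightarrow> 'a form" where
  "or_form \<phi> \<psi> = Neg (And (Neg \<phi>) (Neg \<psi>))"

fun big_or :: "'a \<Rightarrow> 'a form list \<Rightarrow> 'a form" where
  "big_or a [] = false_form a"
| "big_or a (\<phi> # \<phi>s) = or_form \<phi> (big_or a \<phi>s)"

fun at_least :: "'a \<Rightarrow> (nat \<times> 'a form) list \<Rightarrow> nat \<Rightarrow> 'a form" where
  "at_least a [] T = (if T = 0 then true_form a else false_form a)"
| "at_least a ((\<alpha>, \<psi>) # l) T =
     big_or a (map (\<lambda>c. And (Cmp [(1, Count \<psi>)] Ge c) (at_least a l (T - \<alpha> * c))) [0..<Suc T])"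

definition threshold :: "'a \<Rightarrow> cmp \<Rightarrow> nat \<Rightarrow> nat \<Rightarrow> (nat \<times> 'a form) list \<Rightarrow> 'a form" where
  "threshold a c k S l = (case c of
       Ge \<Rightarrow> at_least a l (k - S)
     | Gt \<Rightarrow> at_least a l (Suc k - S)
     | Eq \<Rightarrow> And (at_least a l (k - S)) (Neg (at_least a l (Suc k - S)))
     | Lt \<Rightarrow> Neg (at_least a l (k - S))
     | Le \<Rightarrow> Neg (at_least a l (Suc k - S)))"

fun count_terms :: "(nat \<times> 'a tm) list \<Rightarrow> (nat \<times> 'a form) list" where
  "count_terms [] = []"
| "count_terms ((\<alpha>, Count \<phi>) # ts) = (\<alpha>, \<phi>) # count_terms ts"
| "count_terms ((\<alpha>, Const m) # ts) = count_terms ts"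

fun const_sum :: "(nat \<times> 'a tm) list \<Rightarrow> nat" where
  "const_sum [] = 0"
| "const_sum ((\<alpha>, Count \<phi>) # ts) = const_sum ts"
| "const_sum ((\<alpha>, Const m) # ts) = \<alpha> * m + const_sum ts"

lemma count_terms_in_set: "(\<alpha>, \<phi>) \<in> set (count_terms ts) \<Longrightarrow> (\<alpha>, Count \<phi>) \<in> set ts"
  by (induction ts rule: count_terms.induct) auto

lemma length_count_terms: "length (count_terms ts) \<le> length ts"
  by (induction ts rule: count_terms.induct) auto

function decompose :: "'a \<Rightarrow> 'a form \<Rightarrow> 'a form" where
  "decompose a (Letter b) = Letter b"
| "decompose a (Neg \<phi>) = Neg (decompose a \<phi>)"
| "decompose a (And \<phi> \<psi>) = And (decompose a \<phi>) (decompose a \<psi>)"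
| "decompose a (Cmp ts c k) =
     threshold a c k (const_sum ts) (map (\<lambda>(\<alpha>, \<phi>). (\<alpha>, decompose a \<phi>)) (count_terms ts))"
| "decompose a (Ref j) = Ref j"
  by pat_completeness auto
termination
  by (relation "measure (\<lambda>(a, \<phi>). size \<phi>)") (auto dest: count_terms_in_set size_Count_lt)

section \<open>Semantic correctness\<close>

definition count_holds :: "'a form list \<Rightarrow> 'a list \<Rightarrow> nat \<Rightarrow> 'a form \<Rightarrow> nat" where
  "count_holds P w i \<phi> = length (filter (\<lambda>j. holds P w j \<phi>) [1..<Suc i])"

lemma holds_Cmp:
  "holds P w i (Cmp ts c k) =
     cmp_sem c (sum_list (map (\<lambda>(\<alpha>, t). \<alpha> * (case t of Const m \<Rightarrow> m
        | Count \<phi> \<Rightarrow> count_holds P w i \<phi>)) ts)) k"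
  unfolding count_holds_def by simp

declare holds.simps(4)[simp del]

lemma holds_false_form[simp]: "\<not> holds P w i (false_form a)"
  by (simp add: false_form_def)

lemma holds_true_form[simp]: "holds P w i (true_form a)"
  by (simp add: true_form_def)

lemma holds_or_form[simp]: "holds P w i (or_form \<phi> \<psi>) \<longleftrightarrow> holds P w i \<phi> \<or> holds P w i \<psi>"
  by (simp add: or_form_def)

lemma holds_big_or: "holds P w i (big_or a \<phi>s) \<longleftrightarrow> (\<exists>\<phi>\<in>set \<phi>s. holds P w i \<phi>)"
  by (induction \<phi>s) auto

lemma ex_le_diff_le_iff:
  fixes T \<alpha> x R :: nat
  shows "(\<exists>c\<le>T. c \<le> x \<and> T - \<alpha> * c \<le> R) \<longleftrightarrow> T \<le> \<alpha> * x + R"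
proof
  assume "\<exists>c\<le>T. c \<le> x \<and> T - \<alpha> * c \<le> R"
  then obtain c where "c \<le> x" "T - \<alpha> * c \<le> R" by blast
  moreover have "\<alpha> * c \<le> \<alpha> * x" using \<open>c \<le> x\<close> by simp
  ultimately show "T \<le> \<alpha> * x + R" by linarith
next
  assume "T \<le> \<alpha> * x + R"
  then show "\<exists>c\<le>T. c \<le> x \<and> T - \<alpha> * c \<le> R"
    by (cases "x \<le> T"; cases "\<alpha> = 0") (auto intro!: exI[of _ "min x T"])
qed

lemma holds_at_least:
  "holds P w i (at_least a l T) \<longleftrightarrow> T \<le> (\<Sum>(\<alpha>, \<psi>)\<leftarrow>l. \<alpha> * count_holds P w i \<psi>)"
proof (induction a l T rule: at_least.induct)
  case (2 a \<alpha> \<psi> l T)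
  have "holds P w i (at_least a ((\<alpha>, \<psi>) # l) T) \<longleftrightarrow>
      (\<exists>c\<le>T. c \<le> count_holds P w i \<psi> \<and>
         T - \<alpha> * c \<le> (\<Sum>(\<alpha>, \<psi>)\<leftarrow>l. \<alpha> * count_holds P w i \<psi>))"
    by (auto simp: holds_big_or holds_Cmp 2 less_Suc_eq_le simp del: upt_Suc)
  then show ?case
    by (simp add: ex_le_diff_le_iff)
qed simp

lemma holds_threshold:
  "holds P w i (threshold a c k S l) \<longleftrightarrow>
     cmp_sem c ((\<Sum>(\<alpha>, \<psi>)\<leftarrow>l. \<alpha> * count_holds P w i \<psi>) + S) k"
  by (cases c) (auto simp: threshold_def holds_at_least)

lemma weighted_sum_split:
  "(\<Sum>(\<alpha>, t)\<leftarrow>ts. \<alpha> * (case t of Const m \<Rightarrow> m | Count \<phi> \<Rightarrow> f \<phi>))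
     = (\<Sum>(\<alpha>, \<phi>)\<leftarrow>count_terms ts. \<alpha> * f \<phi>) + const_sum ts"
  by (induction ts rule: count_terms.induct) auto

lemma holds_decompose: "holds (map (decompose a) P) w i (decompose a \<phi>) = holds P w i \<phi>"
proof (induction P w i \<phi> rule: holds.induct)
  case (4 P w i ts c k)
  have "count_holds (map (decompose a) P) w i (decompose a \<phi>) = count_holds P w i \<phi>"
    if "(\<alpha>, \<phi>) \<in> set (count_terms ts)" for \<alpha> \<phi>
    using 4[OF count_terms_in_set[OF that] refl refl] unfolding count_holds_def
    by (intro arg_cong[where f = length] filter_cong) auto
  then have "(\<Sum>(\<alpha>, \<psi>)\<leftarrow>map (\<lambda>(\<alpha>, \<phi>). (\<alpha>, decompose a \<phi>)) (count_terms ts).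
        \<alpha> * count_holds (map (decompose a) P) w i \<psi>)
      = (\<Sum>(\<alpha>, \<phi>)\<leftarrow>count_terms ts. \<alpha> * count_holds P w i \<phi>)"
    by (auto simp: o_def intro!: arg_cong[where f = sum_list] map_cong)
  then show ?case
    by (simp add: holds_threshold holds_Cmp weighted_sum_split)
qed (auto simp: take_map)

section \<open>Syntactic invariants\<close>

inductive_set bool_closure :: "'a \<Rightarrow> 'a form set \<Rightarrow> 'a form set" for a :: 'a and A :: "'a form set"
where
  Letter: "Letter a \<in> bool_closure a A"
| base: "\<phi> \<in> A \<Longrightarrow> \<phi> \<in> bool_closure a A"
| Neg: "\<phi> \<in> bool_closure a A \<Longrightarrow> Neg \<phi> \<in> bool_closure a A"
| And: "\<phi> \<in> bool_closure a A \<Longrightarrow> \<psi> \<in> bool_closure a A \<Longrightarrow> And \<phi> \<psi> \<in> bool_closure a A"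

lemma bool_closure_mono:
  assumes "A \<subseteq> B"
  shows "bool_closure a A \<subseteq> bool_closure a B"
proof
  fix \<phi> assume "\<phi> \<in> bool_closure a A"
  then show "\<phi> \<in> bool_closure a B"
    by induction (use assms in \<open>auto intro: bool_closure.intros\<close>)
qed

lemma big_or_in_bool_closure:
  "set \<phi>s \<subseteq> bool_closure a A \<Longrightarrow> big_or a \<phi>s \<in> bool_closure a A"
  by (induction \<phi>s) (auto simp: false_form_def or_form_def intro: bool_closure.intros)

abbreviation atoms :: "(nat \<times> 'a form) list \<Rightarrow> nat \<Rightarrow> 'a form set" where
  "atoms l T \<equiv> {Cmp [(1, Count \<psi>)] Ge c | \<psi> c. \<psi> \<in> snd ` set l \<and> c \<le> T}"

lemma atoms_mono:
  assumes "set l \<subseteq> set l'" and "T \<le> T'"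
  shows "atoms l T \<subseteq> atoms l' T'"
proof
  fix \<phi> assume "\<phi> \<in> atoms l T"
  then obtain \<psi> c where "\<phi> = Cmp [(1, Count \<psi>)] Ge c" "\<psi> \<in> snd ` set l" "c \<le> T"
    by blast
  moreover from \<open>c \<le> T\<close> have "c \<le> T'" using assms(2) by linarith
  ultimately show "\<phi> \<in> atoms l' T'" using assms(1) by blast
qed

lemma at_least_in_bool_closure: "at_least a l T \<in> bool_closure a (atoms l T)"
proof (induction a l T rule: at_least.induct)
  case (1 a T)
  show ?case
    by (simp add: true_form_def false_form_def bool_closure.Letter bool_closure.Neg bool_closure.And)
next
  case (2 a \<alpha> \<psi> l T)
  let ?A = "atoms ((\<alpha>, \<psi>) # l) T"
  show ?case unfolding at_least.simps
  proof (intro big_or_in_bool_closure subsetI)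
    fix \<phi> assume "\<phi> \<in> set (map (\<lambda>c. And (Cmp [(1, Count \<psi>)] Ge c) (at_least a l (T - \<alpha> * c))) [0..<Suc T])"
    then obtain c where c: "c \<in> set [0..<Suc T]"
      and \<phi>: "\<phi> = And (Cmp [(1, Count \<psi>)] Ge c) (at_least a l (T - \<alpha> * c))"
      by auto
    have "Cmp [(1, Count \<psi>)] Ge c \<in> bool_closure a ?A"
      using c by (intro bool_closure.base) (force simp: less_Suc_eq_le)
    moreover have "atoms l (T - \<alpha> * c) \<subseteq> ?A"
      by (rule atoms_mono) auto
    then have "at_least a l (T - \<alpha> * c) \<in> bool_closure a ?A"
      using 2[OF c] by (rule subsetD[OF bool_closure_mono])
    ultimately show "\<phi> \<in> bool_closure a ?A"
      unfolding \<phi> by (rule bool_closure.And)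
  qed
qed

lemma threshold_in_bool_closure: "threshold a c k S l \<in> bool_closure a (atoms l (Suc k))"
proof -
  have "at_least a l T \<in> bool_closure a (atoms l (Suc k))" if "T \<le> Suc k" for T
  proof -
    have "atoms l T \<subseteq> atoms l (Suc k)" using that by (rule atoms_mono[OF order_refl])
    then show ?thesis using at_least_in_bool_closure by (rule subsetD[OF bool_closure_mono])
  qed
  then show ?thesis
    by (cases c) (simp_all add: threshold_def bool_closure.intros)
qed

lemma frefs_bool_closure: "\<phi> \<in> bool_closure a A \<Longrightarrow> frefs \<phi> \<subseteq> (\<Union>\<psi>\<in>A. frefs \<psi>)"
  by (induction rule: bool_closure.induct) auto

lemma fletters_bool_closure:
  "\<phi> \<in> bool_closure a A \<Longrightarrow> fletters \<phi> \<subseteq> insert a (\<Union>\<psi>\<in>A. fletters \<psi>)"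
  by (induction rule: bool_closure.induct) auto

lemma fconsts_bool_closure:
  "\<phi> \<in> bool_closure a A \<Longrightarrow> set (fconsts \<phi>) \<subseteq> (\<Union>\<psi>\<in>A. set (fconsts \<psi>))"
  by (induction rule: bool_closure.induct) auto

lemma fdecomposed_bool_closure:
  "\<phi> \<in> bool_closure a A \<Longrightarrow> \<forall>\<psi>\<in>A. fdecomposed \<psi> \<Longrightarrow> fdecomposed \<phi>"
  by (induction rule: bool_closure.induct) auto

lemma dp_bool_closure:
  "\<phi> \<in> bool_closure a A \<Longrightarrow> \<forall>\<psi>\<in>A. dp P \<psi> \<le> M \<Longrightarrow> dp P \<phi> \<le> M"
  by (induction rule: bool_closure.induct) auto

lemma fold_max_eq_Max: "fold max xs (m::nat) = Max (set (m # xs))"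
  by (rule Max.set_eq_fold[symmetric])

lemma dp_count_term: "(\<alpha>, Count \<phi>) \<in> set ts \<Longrightarrow> Suc (dp P \<phi>) \<le> dp P (Cmp ts c k)"
  unfolding dp.simps fold_max_eq_Max by (rule Max_ge) force+

lemma fgirth_count_term: "(\<alpha>, Count \<phi>) \<in> set ts \<Longrightarrow> fgirth \<phi> \<le> fgirth (Cmp ts c k)"
  unfolding fgirth.simps fold_max_eq_Max by (rule Max_ge) force+

lemma length_le_fgirth: "length ts \<le> fgirth (Cmp ts c k)"
  unfolding fgirth.simps fold_max_eq_Max by (rule Max_ge) force+

lemma frefs_count_term: "(\<alpha>, Count \<phi>) \<in> set ts \<Longrightarrow> frefs \<phi> \<subseteq> frefs (Cmp ts c k)"
  by force

lemma fletters_count_term: "(\<alpha>, Count \<phi>) \<in> set ts \<Longrightarrow> fletters \<phi> \<subseteq> fletters (Cmp ts c k)"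
  by force

lemma fconsts_count_term:
  "(\<alpha>, Count \<phi>) \<in> set ts \<Longrightarrow> set (fconsts \<phi>) \<subseteq> set (fconsts (Cmp ts c k))"
  by force

lemma in_atoms_decomposeE:
  assumes "\<psi> \<in> atoms (map (\<lambda>(\<alpha>, \<phi>). (\<alpha>, decompose a \<phi>)) (count_terms ts)) T"
  obtains \<alpha> \<phi> c where "(\<alpha>, \<phi>) \<in> set (count_terms ts)"
    and "\<psi> = Cmp [(1, Count (decompose a \<phi>))] Ge c" and "c \<le> T"
  using assms by auto

lemma frefs_decompose: "frefs (decompose a \<phi>) \<subseteq> frefs \<phi>"
proof (induction a \<phi> rule: decompose.induct)
  case (4 a ts c k)
  let ?l = "map (\<lambda>(\<alpha>, \<phi>). (\<alpha>, decompose a \<phi>)) (count_terms ts)"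
  have "frefs \<psi> \<subseteq> frefs (Cmp ts c k)" if "\<psi> \<in> atoms ?l (Suc k)" for \<psi>
    using that
  proof (cases rule: in_atoms_decomposeE)
    case (1 \<alpha> \<phi> m)
    then show ?thesis
      using 4[OF 1(1) refl] frefs_count_term[OF count_terms_in_set[OF 1(1)]] by auto
  qed
  then show ?case
    unfolding decompose.simps
    by (rule order_trans[OF frefs_bool_closure[OF threshold_in_bool_closure] UN_least])
qed auto

lemma fletters_decompose: "fletters (decompose a \<phi>) \<subseteq> insert a (fletters \<phi>)"
proof (induction a \<phi> rule: decompose.induct)
  case (4 a ts c k)
  let ?l = "map (\<lambda>(\<alpha>, \<phi>). (\<alpha>, decompose a \<phi>)) (count_terms ts)"
  have "fletters \<psi> \<subseteq> insert a (fletters (Cmp ts c k))" if "\<psi> \<in> atoms ?l (Suc k)" for \<psi>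
    using that
  proof (cases rule: in_atoms_decomposeE)
    case (1 \<alpha> \<phi> m)
    then show ?thesis
      using 4[OF 1(1) refl] fletters_count_term[OF count_terms_in_set[OF 1(1)]] by auto
  qed
  then have "insert a (\<Union>\<psi>\<in>atoms ?l (Suc k). fletters \<psi>) \<subseteq> insert a (fletters (Cmp ts c k))"
    by blast
  then show ?case
    unfolding decompose.simps
    by (rule order_trans[OF fletters_bool_closure[OF threshold_in_bool_closure]])
qed auto

lemma fconsts_decompose:
  "set (fconsts \<phi>) \<subseteq> {..M} \<Longrightarrow> set (fconsts (decompose a \<phi>)) \<subseteq> {..Suc M}"
proof (induction a \<phi> rule: decompose.induct)
  case (4 a ts c k)
  let ?l = "map (\<lambda>(\<alpha>, \<phi>). (\<alpha>, decompose a \<phi>)) (count_terms ts)"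
  have "set (fconsts \<psi>) \<subseteq> {..Suc M}" if "\<psi> \<in> atoms ?l (Suc k)" for \<psi>
    using that
  proof (cases rule: in_atoms_decomposeE)
    case (1 \<alpha> \<phi> m)
    have "set (fconsts \<phi>) \<subseteq> {..M}"
      using fconsts_count_term[OF count_terms_in_set[OF 1(1)]] 4(2) by (rule order_trans)
    moreover have "k \<le> M" using 4(2) by simp
    ultimately show ?thesis
      using 4(1)[OF 1(1) refl] 1(2,3) by auto
  qed
  then show ?case
    unfolding decompose.simps
    by (rule order_trans[OF fconsts_bool_closure[OF threshold_in_bool_closure] UN_least])
qed auto

lemma fdecomposed_decompose: "fdecomposed (decompose a \<phi>)"
proof (induction a \<phi> rule: decompose.induct)
  case (4 a ts c k)
  have "fdecomposed \<psi>"
    if "\<psi> \<in> atoms (map (\<lambda>(\<alpha>, \<phi>). (\<alpha>, decompose a \<phi>)) (count_terms ts)) (Suc k)" for \<psi>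
    using that by (cases rule: in_atoms_decomposeE) (use 4 in auto)
  then show ?case
    unfolding decompose.simps by (intro fdecomposed_bool_closure[OF threshold_in_bool_closure] ballI)
qed auto

lemma dp_decompose: "dp (map (decompose a) P) (decompose a \<phi>) \<le> dp P \<phi>"
proof (induction P \<phi> rule: dp.induct)
  case (4 P ts c k)
  have "dp (map (decompose a) P) \<psi> \<le> dp P (Cmp ts c k)"
    if "\<psi> \<in> atoms (map (\<lambda>(\<alpha>, \<phi>). (\<alpha>, decompose a \<phi>)) (count_terms ts)) (Suc k)" for \<psi>
    using that
  proof (cases rule: in_atoms_decomposeE)
    case (1 \<alpha> \<phi> m)
    note count_term = count_terms_in_set[OF 1(1)]
    have "dp (map (decompose a) P) \<psi> = Suc (dp (map (decompose a) P) (decompose a \<phi>))"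
      using 1(2) by simp
    also have "\<dots> \<le> Suc (dp P \<phi>)"
      using 4[OF count_term refl refl] by simp
    also have "\<dots> \<le> dp P (Cmp ts c k)"
      by (rule dp_count_term[OF count_term])
    finally show ?thesis .
  qed
  then show ?case
    unfolding decompose.simps by (intro dp_bool_closure[OF threshold_in_bool_closure] ballI)
next
  case (5 P j)
  then show ?case by (simp add: take_map)
qed (auto simp: le_max_iff_disj)

section \<open>Size of the translation\<close>

lemma bitlen_Suc_0[simp]: "bitlen (Suc 0) = 1"
  by (simp add: bitlen.simps)

lemma bitlen_le_Suc: "bitlen n \<le> Suc n"
proof (induction n rule: bitlen.induct)
  case (1 n)
  then show ?case
    by (cases "n < 2") (simp_all add: bitlen.simps[of n])
qed

lemma less_power_bitlen: "n < 2 ^ bitlen n"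
proof (induction n rule: bitlen.induct)
  case (1 n)
  then show ?case
    by (cases "n < 2") (simp_all add: bitlen.simps[of n])
qed

lemma bitlen_le: "n < 2 ^ k \<Longrightarrow> 0 < k \<Longrightarrow> bitlen n \<le> k"
proof (induction n arbitrary: k rule: bitlen.induct)
  case (1 n)
  show ?case
  proof (cases "n < 2")
    case False
    then obtain k' where "k = Suc k'" "0 < k'"
      using 1(2,3) by (cases k; cases "k - 1") auto
    then show ?thesis
      using 1 False by (simp add: bitlen.simps[of n])
  qed (simp add: bitlen.simps[of n] Suc_leI 1(3))
qed

lemma bitlen_pos: "0 < bitlen n"
  by (simp add: bitlen.simps[of n])

lemma at_least_size_step:
  fixes K N f S :: nat
  assumes "2 \<le> K" and "1 \<le> N"
  shows "4 + K * (9 + K + f + N * (1 + S)) \<le> 8 * K * K * N * (1 + f + S)"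
proof -
  obtain k n where "K = k + 2" "N = n + 1"
    using assms by (metis le_add_diff_inverse2)
  then show ?thesis by (simp add: algebra_simps)
qed

lemma fsize_big_or: "fsize (big_or a \<phi>s) = 4 + (\<Sum>\<phi>\<leftarrow>\<phi>s. 4 + fsize \<phi>)"
  by (induction \<phi>s) (simp_all add: false_form_def or_form_def)

text \<open>\<open>K\<close> bounds both the number \<open>T + 1\<close> of disjuncts per level and the bit length of
  their constants \<open>c \<le> T\<close>.\<close>

lemma fsize_at_least:
  assumes "2 \<le> K" and "T < K"
  shows "fsize (at_least a l T) \<le> (8 * K * K) ^ Suc (length l) * (1 + (\<Sum>p\<leftarrow>l. fsize (snd p)))"
  using assms(2)
proof (induction a l T rule: at_least.induct)
  case (1 a T)
  have "5 \<le> 8 * K * K" using assms(1) mult_le_mono[OF assms(1) assms(1)] by simp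
  then show ?case by (simp add: true_form_def false_form_def)
next
  case (2 a \<alpha> \<psi> l T)
  define N where "N = (8 * K * K) ^ Suc (length l)"
  define S where "S = (\<Sum>p\<leftarrow>l. fsize (snd p))"
  define f where "f = fsize \<psi>"
  let ?disjunct = "\<lambda>c. And (Cmp [(1, Count \<psi>)] Ge c) (at_least a l (T - \<alpha> * c))"
  have "4 + fsize (?disjunct c) \<le> 9 + K + f + N * (1 + S)" if "c \<in> set [0..<Suc T]" for c
  proof -
    have "bitlen c \<le> K" using that bitlen_le_Suc[of c] 2(2) by (simp add: less_Suc_eq_le del: upt_Suc)
    moreover have "fsize (at_least a l (T - \<alpha> * c)) \<le> N * (1 + S)"
      unfolding N_def S_def using 2 that by simp
    ultimately show ?thesis by (simp add: f_def)
  qed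
  then have "(\<Sum>c\<leftarrow>[0..<Suc T]. 4 + fsize (?disjunct c)) \<le> Suc T * (9 + K + f + N * (1 + S))"
    using sum_list_mono[of "[0..<Suc T]" "\<lambda>c. 4 + fsize (?disjunct c)" "\<lambda>_. 9 + K + f + N * (1 + S)"]
    by (simp add: sum_list_triv del: upt_Suc)
  also have "\<dots> \<le> K * (9 + K + f + N * (1 + S))"
    using 2(2) by (intro mult_le_mono1) simp
  finally have "fsize (at_least a ((\<alpha>, \<psi>) # l) T) \<le> 4 + K * (9 + K + f + N * (1 + S))"
    by (simp add: fsize_big_or o_def del: upt_Suc)
  also have "\<dots> \<le> 8 * K * K * N * (1 + f + S)"
    by (rule at_least_size_step[OF assms(1)]) (use assms(1) in \<open>simp add: N_def\<close>)
  finally show ?case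
    by (simp add: N_def S_def f_def algebra_simps)
qed

lemma fsize_threshold:
  assumes "2 \<le> K" and "Suc k < K"
  shows "fsize (threshold a c k S l)
    \<le> 4 * (8 * K * K) ^ Suc (length l) * (1 + (\<Sum>p\<leftarrow>l. fsize (snd p)))"
proof -
  define X where "X = (8 * K * K) ^ Suc (length l) * (1 + (\<Sum>p\<leftarrow>l. fsize (snd p)))"
  have "fsize (at_least a l T) \<le> X" if "T \<le> Suc k" for T
    unfolding X_def using assms that by (intro fsize_at_least) auto
  then have "fsize (at_least a l (k - S)) \<le> X" "fsize (at_least a l (Suc k - S)) \<le> X"
    by simp_all
  moreover have "0 < X" using assms(1) by (simp add: X_def)
  ultimately have "fsize (threshold a c k S l) \<le> 4 * X"
    by (cases c) (simp_all add: threshold_def)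
  then show ?thesis by (simp add: X_def mult.assoc)
qed

lemma fsize_count_terms: "1 + (\<Sum>p\<leftarrow>count_terms ts. fsize (snd p)) \<le> fsize (Cmp ts c k)"
  by (induction ts rule: count_terms.induct) auto

lemma fsize_decompose_Cmp:
  assumes "2 \<le> K" and "Suc k < K" and "length ts \<le> g" and D: "4 * (8 * K * K) ^ Suc g \<le> D"
    and "1 \<le> E"
    and sub: "\<And>\<alpha> \<phi>. (\<alpha>, \<phi>) \<in> set (count_terms ts) \<Longrightarrow> fsize (decompose a \<phi>) \<le> E * fsize \<phi>"
  shows "fsize (decompose a (Cmp ts c k)) \<le> D * E * fsize (Cmp ts c k)"
proof -
  define S where "S = (\<Sum>p\<leftarrow>count_terms ts. fsize (snd p))"
  let ?l = "map (\<lambda>(\<alpha>, \<phi>). (\<alpha>, decompose a \<phi>)) (count_terms ts)"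
  have "(\<Sum>p\<leftarrow>?l. fsize (snd p)) \<le> (\<Sum>p\<leftarrow>count_terms ts. E * fsize (snd p))"
    using sub by (auto simp: o_def case_prod_beta intro!: sum_list_mono)
  also have "\<dots> = E * S"
    by (simp add: S_def sum_list_const_mult)
  finally have sum_le: "(\<Sum>p\<leftarrow>?l. fsize (snd p)) \<le> E * S" .
  have "fsize (decompose a (Cmp ts c k))
      \<le> 4 * (8 * K * K) ^ Suc (length ?l) * (1 + (\<Sum>p\<leftarrow>?l. fsize (snd p)))"
    unfolding decompose.simps by (rule fsize_threshold[OF assms(1,2)])
  also have "\<dots> \<le> 4 * (8 * K * K) ^ Suc g * (1 + E * S)"
  proof -
    have "length ?l \<le> g"
      using length_count_terms[of ts] assms(3) by simp
    then have "(8 * K * K) ^ Suc (length ?l) \<le> (8 * K * K) ^ Suc g"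
      using assms(1) by (intro power_increasing) simp_all
    then show ?thesis using sum_le by (intro mult_le_mono) simp_all
  qed
  also have "\<dots> \<le> D * (E * (1 + S))"
    using D \<open>1 \<le> E\<close> by (intro mult_le_mono) (auto simp: algebra_simps)
  also have "\<dots> \<le> D * E * fsize (Cmp ts c k)"
    using fsize_count_terms[of ts c k] unfolding S_def mult.assoc by (intro mult_le_mono2)
  finally show ?thesis .
qed

lemma fsize_decompose:
  assumes "2 \<le> K" and "Suc M < K" and D: "4 * (8 * K * K) ^ Suc g \<le> D"
    and "fgirth \<phi> \<le> g" and "set (fconsts \<phi>) \<subseteq> {..M}"
  shows "fsize (decompose a \<phi>) \<le> D ^ Suc (dp P \<phi>) * fsize \<phi>"
proof -
  have "1 \<le> 4 * (8 * K * K) ^ Suc g" using assms(1) by simp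
  with D have "1 \<le> D" by linarith
  show ?thesis
    using assms(4,5)
  proof (induction a \<phi> rule: decompose.induct)
    case (2 a \<phi>)
    let ?E = "D ^ Suc (dp P \<phi>)"
    have "fsize (decompose a (Neg \<phi>)) \<le> 1 + ?E * fsize \<phi>" using 2 by simp
    also have "\<dots> \<le> ?E * fsize (Neg \<phi>)" using \<open>1 \<le> D\<close> by simp
    finally show ?case by simp
  next
    case (3 a \<phi> \<psi>)
    let ?E = "D ^ Suc (dp P (And \<phi> \<psi>))"
    have "D ^ Suc (dp P \<phi>) \<le> ?E" "D ^ Suc (dp P \<psi>) \<le> ?E"
      using \<open>1 \<le> D\<close> by (auto intro: power_increasing)
    then have "fsize (decompose a \<phi>) \<le> ?E * fsize \<phi>" "fsize (decompose a \<psi>) \<le> ?E * fsize \<psi>"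
      using 3 by (auto intro: order_trans mult_le_mono1)
    then have "fsize (decompose a (And \<phi> \<psi>)) \<le> 1 + ?E * fsize \<phi> + ?E * fsize \<psi>" by simp
    also have "\<dots> \<le> ?E * fsize (And \<phi> \<psi>)" using \<open>1 \<le> D\<close> by (simp add: algebra_simps)
    finally show ?case .
  next
    case (4 a ts c k)
    define e where "e = dp P (Cmp ts c k)"
    have "fsize (decompose a \<phi>) \<le> D ^ e * fsize \<phi>" if "(\<alpha>, \<phi>) \<in> set (count_terms ts)" for \<alpha> \<phi>
    proof -
      note count_term = count_terms_in_set[OF that]
      have "fgirth \<phi> \<le> g"
        using fgirth_count_term[OF count_term] 4(2) by (rule le_trans)
      moreover have "set (fconsts \<phi>) \<subseteq> {..M}"
        using fconsts_count_term[OF count_term] 4(3) by (rule order_trans)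
      ultimately have "fsize (decompose a \<phi>) \<le> D ^ Suc (dp P \<phi>) * fsize \<phi>"
        using 4(1)[OF that refl] by blast
      also have "\<dots> \<le> D ^ e * fsize \<phi>"
        unfolding e_def
        by (rule mult_le_mono1, rule power_increasing[OF dp_count_term[OF count_term] \<open>1 \<le> D\<close>])
      finally show ?thesis .
    qed
    moreover have "Suc k < K" using 4(3) assms(2) by simp
    moreover have "length ts \<le> g" using length_le_fgirth[of ts c k] 4(2) by simp
    ultimately have "fsize (decompose a (Cmp ts c k)) \<le> D * D ^ e * fsize (Cmp ts c k)"
      using \<open>1 \<le> D\<close> by (intro fsize_decompose_Cmp[OF assms(1) _ _ D]) simp_all
    then show ?case by (simp add: e_def)
  qed (use \<open>1 \<le> D\<close> in simp_all)
qed

lemma fconsts_le_Max: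
  "\<phi> \<in> set P \<Longrightarrow> set (fconsts \<phi>) \<subseteq> {..Max (set (0 # concat (map fconsts P)))}"
  by (auto intro!: Max_ge)

lemma Suc_Max_fconsts_less: "Suc (Max (set (0 # concat (map fconsts P)))) < 2 ^ Suc (precision P)"
proof -
  define B where "B = Max (set (0 # concat (map fconsts P)))"
  show ?thesis
    using less_power_bitlen[of B] unfolding precision_def B_def[symmetric] by simp
qed

lemma fgirth_le_girth: "\<phi> \<in> set P \<Longrightarrow> fgirth \<phi> \<le> girth P"
  unfolding girth_def by simp

lemma dp_le_depth: "i < length P \<Longrightarrow> dp (take i P) (P ! i) \<le> depth P"
  unfolding depth_def by simp

lemma program_decompose:
  assumes "program \<Sigma> P" and "a \<in> \<Sigma>"
  shows "program \<Sigma> (map (decompose a) P)"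
proof -
  have "(\<forall>j\<in>frefs (decompose a \<phi>). j < i) \<and> fletters (decompose a \<phi>) \<subseteq> \<Sigma>"
    if "\<forall>j\<in>frefs \<phi>. j < i" and "fletters \<phi> \<subseteq> \<Sigma>" for \<phi> i
    using that frefs_decompose[of a \<phi>] fletters_decompose[of a \<phi>] \<open>a \<in> \<Sigma>\<close> by blast
  with \<open>program \<Sigma> P\<close> show ?thesis
    unfolding program_def by simp blast
qed

lemma decomposed_decompose: "decomposed (map (decompose a) P)"
  by (simp add: decomposed_def fdecomposed_decompose)

lemma lang_decompose: "P \<noteq> [] \<Longrightarrow> lang \<Sigma> (map (decompose a) P) = lang \<Sigma> P"
  by (simp add: lang_def map_butlast[symmetric] last_map holds_decompose)

lemma depth_decompose: "depth (map (decompose a) P) \<le> depth P"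
proof -
  have "dp (take i (map (decompose a) P)) (map (decompose a) P ! i) \<le> depth P"
    if "i < length P" for i
    using order_trans[OF dp_decompose dp_le_depth[OF that]] that by (simp add: take_map)
  then show ?thesis
    unfolding depth_def[of "map (decompose a) P"] by (intro Max.boundedI) auto
qed

lemma precision_decompose: "precision (map (decompose a) P) \<le> Suc (precision P)"
proof -
  define B where "B = Max (set (0 # concat (map fconsts P)))"
  have "set (fconsts (decompose a \<phi>)) \<subseteq> {..Suc B}" if "\<phi> \<in> set P" for \<phi>
    unfolding B_def by (rule fconsts_decompose[OF fconsts_le_Max[OF that]])
  then have "Max (set (0 # concat (map fconsts (map (decompose a) P)))) \<le> Suc B"
    by (intro Max.boundedI) auto
  also have "Suc B < 2 ^ Suc (precision P)"
    unfolding B_def by (rule Suc_Max_fconsts_less)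
  finally show ?thesis
    unfolding precision_def by (rule bitlen_le) simp
qed

lemma psize_decompose:
  "psize (map (decompose a) P)
     \<le> 2 ^ ((2 + (2 * precision P + 5) * Suc (girth P)) * Suc (depth P)) * psize P"
proof -
  define K :: nat where "K = 2 ^ Suc (precision P)"
  define D :: nat where "D = 2 ^ (2 + (2 * precision P + 5) * Suc (girth P))"
  define B where "B = Max (set (0 # concat (map fconsts P)))"
  have "2 \<le> K" by (simp add: K_def)
  have "1 \<le> D" by (simp add: D_def)
  have "8 * K * K = 2 ^ (2 * precision P + 5)"
    by (simp add: K_def power_add power_mult power2_eq_square mult_ac)
  then have D_bound: "4 * (8 * K * K) ^ Suc (girth P) \<le> D"
    unfolding D_def by (simp only:) (simp add: power_add power_mult)
  have "Suc B < K"
    unfolding B_def K_def by (rule Suc_Max_fconsts_less)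
  have "fsize (decompose a \<phi>) \<le> D ^ Suc (depth P) * fsize \<phi>" if \<phi>: "\<phi> \<in> set P" for \<phi>
  proof -
    obtain i where i: "i < length P" "P ! i = \<phi>"
      using \<phi> by (auto simp: in_set_conv_nth)
    have "fsize (decompose a \<phi>) \<le> D ^ Suc (dp (take i P) \<phi>) * fsize \<phi>"
      using fsize_decompose[OF \<open>2 \<le> K\<close> \<open>Suc B < K\<close> D_bound]
        fgirth_le_girth[OF \<phi>] fconsts_le_Max[OF \<phi>] by (simp only: B_def)
    also have "\<dots> \<le> D ^ Suc (depth P) * fsize \<phi>"
      using dp_le_depth[OF i(1)] unfolding i(2)
      by (rule mult_le_mono1[OF power_increasing[OF Suc_le_mono[THEN iffD2] \<open>1 \<le> D\<close>]])
    finally show ?thesis .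
  qed
  then have "psize (map (decompose a) P) \<le> (\<Sum>\<phi>\<leftarrow>P. D ^ Suc (depth P) * fsize \<phi>)"
    unfolding psize_def map_map o_def by (rule sum_list_mono)
  also have "\<dots> = 2 ^ ((2 + (2 * precision P + 5) * Suc (girth P)) * Suc (depth P)) * psize P"
    by (simp only: psize_def sum_list_const_mult D_def power_mult)
  finally show ?thesis .
qed

lemma exponent_bound:
  fixes p g d :: nat
  shows "(2 + (2 * p + 5) * Suc g) * Suc d \<le> 9 * (p + g + d + 1) ^ 9"
proof -
  define s where "s = p + g + d + 1"
  have "1 \<le> s" "2 * p + 5 \<le> 7 * s" "Suc g \<le> s" "Suc d \<le> s"
    by (simp_all add: s_def)
  then have "(2 * p + 5) * Suc g \<le> 7 * s * s"
    using mult_le_mono by blast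
  moreover have "2 \<le> 2 * s * s"
    using \<open>1 \<le> s\<close> by simp
  ultimately have "2 + (2 * p + 5) * Suc g \<le> 9 * s * s"
    by linarith
  then have "(2 + (2 * p + 5) * Suc g) * Suc d \<le> 9 * s * s * s"
    using \<open>Suc d \<le> s\<close> by (rule mult_le_mono)
  also have "\<dots> = 9 * s ^ 3"
    by (simp add: power3_eq_cube)
  also have "\<dots> \<le> 9 * s ^ 9"
    using \<open>1 \<le> s\<close> by (simp add: power_increasing)
  finally show ?thesis
    unfolding s_def .
qed

lemma psize_decompose_le:
  "psize (map (decompose a) P) \<le> 2 ^ (9 * (precision P + girth P + depth P + 1) ^ 9) * psize P"
  using psize_decompose
  by (rule order_trans) (rule mult_le_mono1, rule power_increasing[OF exponent_bound], simp)

theorem lemma4p2: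
  shows "\<exists>C::nat. \<forall>(\<Sigma>::'a set) P.
     finite \<Sigma> \<and> \<Sigma> \<noteq> {} \<and> program \<Sigma> P \<longrightarrow>
     (\<exists>Q. program \<Sigma> Q \<and> decomposed Q \<and> lang \<Sigma> Q = lang \<Sigma> P
        \<and> psize Q \<le> C * psize P * 2 ^ (C * (precision P + girth P + depth P + 1) ^ C)
        \<and> depth Q \<le> C * (depth P + 1)
        \<and> precision Q \<le> C * precision P)"
proof (intro exI[of _ 9] allI impI, elim conjE)
  fix \<Sigma> :: "'a set" and P
  assume "\<Sigma> \<noteq> {}" and P: "program \<Sigma> P"
  then obtain a where a: "a \<in> \<Sigma>" by blast
  show "\<exists>Q. program \<Sigma> Q \<and> decomposed Q \<and> lang \<Sigma> Q = lang \<Sigma> P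
        \<and> psize Q \<le> 9 * psize P * 2 ^ (9 * (precision P + girth P + depth P + 1) ^ 9)
        \<and> depth Q \<le> 9 * (depth P + 1) \<and> precision Q \<le> 9 * precision P"
  proof (intro exI[of _ "map (decompose a) P"] conjI)
    show "lang \<Sigma> (map (decompose a) P) = lang \<Sigma> P"
      using P by (simp add: program_def lang_decompose)
    show "psize (map (decompose a) P)
        \<le> 9 * psize P * 2 ^ (9 * (precision P + girth P + depth P + 1) ^ 9)"
      using psize_decompose_le[of a P] by (simp add: algebra_simps)
    show "depth (map (decompose a) P) \<le> 9 * (depth P + 1)"
      using depth_decompose[of a P] by simp
    have "0 < precision P"
      unfolding precision_def by (rule bitlen_pos)
    then show "precision (map (decompose a) P) \<le> 9 * precision P"
      using precision_decompose[of a P] by simp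
  qed (simp_all add: program_decompose[OF P a] decomposed_decompose)
qed

end
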